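(* Let $d=2$, $\varepsilon>0$, $\pi<q^{2+\varepsilon}$ and $L=q^{-1-\varepsilon/3}$. For $q$ small enough, the $\nu\otimes\mu$-probability that the origin belongs to an infinite cluster of good boxes is at least $1-16q^{\varepsilon/3}$.
   Context: Environment $\omega\in\{\text{susceptible},\text{immune}\}^{\mathbb{Z}^2}$ drawn from $\nu$, the product measure with $\nu(\omega_x=\text{immune})=\pi$; given $\omega$, a configuration $\eta\in\{i,h\}^{\mathcal{S}}$ on the susceptible set $\mathcal{S}$ is drawn from $\mu$, the product measure with $\mu(\eta_x=i)=q$; $\nu\otimes\mu$ is the joint law. Boxes are the sets $L\hat x+[L]^2$, $\hat x\in\mathbb{Z}^2$, with $[L]=\{1,\dots,L\}$ ($L$ rounded to an integer), forming a coarse-grained lattice in which two boxes are adjacent when their indices $\hat x$ are nearest neighbours in $\mathbb{Z}^2$. A box is good if all its sites are susceptible and each of its rows and columns contains at least one infected site. A cluster of good boxes is a connected component of good boxes in the coarse-grained lattice; "the origin belongs to" it means the box containing the origin is in it. *)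

theory Defs
  imports "HOL-Probability.Probability"
begin

type_synonym site = "int \<times> int"

text \<open>Environment: omega x = True means site x is immune.
  Configuration: eta x = True means site x is infected (i), False healthy (h).
  The values of eta at immune sites are irrelevant for every event below.\<close>

definition env_law :: "real \<Rightarrow> (site \<Rightarrow> bool) measure" where
  "env_law p = PiM UNIV (\<lambda>_. measure_pmf (bernoulli_pmf p))"

definition config_law :: "real \<Rightarrow> (site \<Rightarrow> bool) measure" where
  "config_law q = PiM UNIV (\<lambda>_. measure_pmf (bernoulli_pmf q))"

definition joint_law :: "real \<Rightarrow> real \<Rightarrow> ((site \<Rightarrow> bool) \<times> (site \<Rightarrow> bool)) measure" where
  "joint_law p q = env_law p \<Otimes>\<^sub>M config_law q"

definition box :: "nat \<Rightarrow> site \<Rightarrow> site set" where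
  "box L xh = {(int L * fst xh + i, int L * snd xh + j) | i j. 1 \<le> i \<and> i \<le> int L \<and> 1 \<le> j \<and> j \<le> int L}"

definition good_box :: "nat \<Rightarrow> (site \<Rightarrow> bool) \<Rightarrow> (site \<Rightarrow> bool) \<Rightarrow> site \<Rightarrow> bool" where
  "good_box L omega eta xh \<longleftrightarrow>
     (\<forall>x \<in> box L xh. \<not> omega x) \<and>
     (\<forall>j \<in> {1..int L}. \<exists>i \<in> {1..int L}. eta (int L * fst xh + i, int L * snd xh + j)) \<and>
     (\<forall>i \<in> {1..int L}. \<exists>j \<in> {1..int L}. eta (int L * fst xh + i, int L * snd xh + j))"

definition nn_adj :: "site \<Rightarrow> site \<Rightarrow> bool" where
  "nn_adj a b \<longleftrightarrow> \<bar>fst a - fst b\<bar> + \<bar>snd a - snd b\<bar> = 1"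

definition good_cluster :: "nat \<Rightarrow> (site \<Rightarrow> bool) \<Rightarrow> (site \<Rightarrow> bool) \<Rightarrow> site \<Rightarrow> site set" where
  "good_cluster L omega eta xh =
     (if good_box L omega eta xh then
        {y. (\<lambda>a b. nn_adj a b \<and> good_box L omega eta a \<and> good_box L omega eta b)\<^sup>*\<^sup>* xh y}
      else {})"

definition origin_in_infinite_cluster :: "nat \<Rightarrow> (site \<Rightarrow> bool) \<Rightarrow> (site \<Rightarrow> bool) \<Rightarrow> bool" where
  "origin_in_infinite_cluster L omega eta \<longleftrightarrow>
     (\<exists>xh. (0,0) \<in> box L xh \<and> good_box L omega eta xh \<and> infinite (good_cluster L omega eta xh))"

definition box_side :: "real \<Rightarrow> real \<Rightarrow> nat" where
  "box_side q eps = nat \<lfloor>q powr (-1 - eps/3)\<rfloor>"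

end

theory Submission
  imports Defs "HOL-Real_Asymp.Real_Asymp"
begin

(* Multi-scale renormalisation. A coarse box is good at level 0 if it is a good box, and a
   triadic block of 3^(k+1) x 3^(k+1) boxes is good at level k+1 if at most one of its nine
   level-k sub-blocks is bad. In a block that is good at level k, the good boxes reached through
   good sub-blocks form a connected set of good boxes with more than k elements. Bad events of
   distinct blocks of one level depend on disjoint sets of sites, hence are independent, so the
   probability b_k that a level-k block is bad satisfies b_(k+1) <= 81 b_k^2, and b_k <= b_0 2^-k
   once 162 b_0 <= 1. For L = q^(-1-eps/3) a box is bad with probability
   b_0 <= L^2 pi + 2 L (1-q)^L <= 2 q^(eps/3). The box containing the origin lies in a block of
   every level, so by a union bound it is good at all levels, and thus in an infinite cluster,
   with probability at least 1 - 2 b_0 >= 1 - 4 q^(eps/3). *)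

section \<open>Triadic blocks of boxes\<close>

definition at_most_one_bad :: "('a \<Rightarrow> bool) \<Rightarrow> 'a set \<Rightarrow> bool" where
  "at_most_one_bad G S \<longleftrightarrow> (\<forall>u\<in>S. \<forall>v\<in>S. u \<noteq> v \<longrightarrow> G u \<or> G v)"

lemma at_most_one_badD: "at_most_one_bad G S \<Longrightarrow> u \<in> S \<Longrightarrow> v \<in> S \<Longrightarrow> u \<noteq> v \<Longrightarrow> G u \<or> G v"
  by (simp add: at_most_one_bad_def)

lemma at_most_one_bad_comp:
  assumes "at_most_one_bad G S" "inj_on f T" "f ` T \<subseteq> S"
  shows "at_most_one_bad (\<lambda>u. G (f u)) T"
  unfolding at_most_one_bad_def
proof (intro ballI impI)
  fix u v
  assume "u \<in> T" "v \<in> T" "u \<noteq> v"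
  with assms show "G (f u) \<or> G (f v)"
    by (intro at_most_one_badD[of G S]) (auto simp: inj_on_contraD)
qed

lemma at_most_one_bad_two_good:
  assumes "at_most_one_bad G S" "a \<in> S" "b \<in> S" "c \<in> S" "a \<noteq> b" "a \<noteq> c" "b \<noteq> c"
  shows "\<exists>u\<in>S. \<exists>v\<in>S. u \<noteq> v \<and> G u \<and> G v"
proof -
  have "G a \<or> G b" "G a \<or> G c" "G b \<or> G c"
    using at_most_one_badD[OF assms(1)] assms(2-7) by blast+
  with assms(2-7) show ?thesis by blast
qed

lemma at_most_one_bad_common_good:
  assumes "at_most_one_bad P {0..2::int}" "at_most_one_bad Q {0..2}"
  shows "\<exists>j\<in>{0..2}. P j \<and> Q j"
proof -
  have "P 0 \<or> P 1" "P 0 \<or> P 2" "P 1 \<or> P 2"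
    by (rule at_most_one_badD[OF assms(1)]; simp)+
  moreover have "Q 0 \<or> Q 1" "Q 0 \<or> Q 2" "Q 1 \<or> Q 2"
    by (rule at_most_one_badD[OF assms(2)]; simp)+
  ultimately have "\<exists>j\<in>{0, 1, 2}. P j \<and> Q j"
    by blast
  moreover have "{0, 1, 2} \<subseteq> {0..2::int}"
    by auto
  ultimately show ?thesis
    by blast
qed

definition child :: "site \<Rightarrow> int \<times> int \<Rightarrow> site" where
  "child c u = (3 * fst c + fst u, 3 * snd c + snd u)"

abbreviation cells :: "(int \<times> int) set" where
  "cells \<equiv> {0..2} \<times> {0..2}"

definition children :: "site \<Rightarrow> site set" where
  "children c = child c ` cells"

primrec descendants :: "nat \<Rightarrow> site \<Rightarrow> site set" where
  "descendants 0 c = {c}"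
| "descendants (Suc k) c = (\<Union>s\<in>children c. descendants k s)"

primrec level_good :: "(site \<Rightarrow> bool) \<Rightarrow> nat \<Rightarrow> site \<Rightarrow> bool" where
  "level_good g 0 c = g c"
| "level_good g (Suc k) c = at_most_one_bad (level_good g k) (children c)"

primrec good_core :: "(site \<Rightarrow> bool) \<Rightarrow> nat \<Rightarrow> site \<Rightarrow> site set" where
  "good_core g 0 c = {c}"
| "good_core g (Suc k) c = (\<Union>s\<in>{s\<in>children c. level_good g k s}. good_core g k s)"

abbreviation good_adj :: "(site \<Rightarrow> bool) \<Rightarrow> site \<Rightarrow> site \<Rightarrow> bool" where
  "good_adj g \<equiv> \<lambda>a b. nn_adj a b \<and> g a \<and> g b"

lemma inj_child: "inj (child c)"
  by (auto simp: inj_def child_def prod_eq_iff)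

lemma child_in_children: "u \<in> cells \<Longrightarrow> child c u \<in> children c"
  by (simp add: children_def)

lemma finite_children: "finite (children c)"
  by (simp add: children_def)

lemma card_children: "card (children c) = 9"
  by (simp add: children_def card_image inj_on_subset[OF inj_child] card_cartesian_product)

lemma nn_adj_sym: "nn_adj a b \<Longrightarrow> nn_adj b a"
  by (simp add: nn_adj_def abs_minus_commute)

lemma nn_adj_child_iff: "nn_adj (child c u) (child c v) \<longleftrightarrow> nn_adj u v"
  by (simp add: nn_adj_def child_def)

lemma nn_adj_cases:
  assumes "nn_adj c c'"
  obtains "c' = (fst c + 1, snd c)" | "c = (fst c' + 1, snd c')"
    | "c' = (fst c, snd c + 1)" | "c = (fst c', snd c' + 1)"
proof -
  have "c' = (fst c + 1, snd c) \<or> c = (fst c' + 1, snd c') \<or>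
      c' = (fst c, snd c + 1) \<or> c = (fst c', snd c' + 1)"
    using assms by (cases c, cases c') (auto simp: nn_adj_def abs_if split: if_splits)
  with that show thesis by blast
qed

lemma finite_descendants: "finite (descendants k c)"
  by (induction k arbitrary: c) (auto simp: finite_children)

lemma descendants_div: "b \<in> descendants k c \<Longrightarrow> (fst b div 3 ^ k, snd b div 3 ^ k) = c"
proof (induction k arbitrary: c)
  case 0
  then show ?case by simp
next
  case (Suc k)
  then obtain u where u: "u \<in> cells" "b \<in> descendants k (child c u)"
    by (auto simp: children_def)
  have div_Suc: "x div 3 ^ Suc k = (x div 3 ^ k) div 3" for x :: int
    unfolding power_Suc2 by (rule zdiv_zmult2_eq) simp
  from Suc.IH[OF u(2)] have "fst b div 3 ^ k = 3 * fst c + fst u" "snd b div 3 ^ k = 3 * snd c + snd u"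
    by (auto simp: child_def)
  moreover have "fst u div 3 = 0" "snd u div 3 = 0"
    using u(1) by auto
  ultimately show ?case
    unfolding div_Suc by (simp add: prod_eq_iff)
qed

lemma disjoint_descendants: "c \<noteq> c' \<Longrightarrow> descendants k c \<inter> descendants k c' = {}"
  using descendants_div by blast

lemma level_good_Suc_cells:
  "level_good g (Suc k) c \<Longrightarrow> at_most_one_bad (\<lambda>u. level_good g k (child c u)) cells"
  using at_most_one_bad_comp[of "level_good g k" "children c" "child c" cells] inj_on_subset[OF inj_child]
  by (simp add: children_def)

lemma good_core_subset_descendants: "good_core g k c \<subseteq> descendants k c"
  by (induction k arbitrary: c) auto

lemma finite_good_core: "finite (good_core g k c)"
  using finite_subset[OF good_core_subset_descendants finite_descendants] .

lemma good_core_good: "level_good g k c \<Longrightarrow> a \<in> good_core g k c \<Longrightarrow> g a"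
  by (induction k arbitrary: c) auto

lemma good_core_child_subset:
  "u \<in> cells \<Longrightarrow> level_good g k (child c u) \<Longrightarrow> good_core g k (child c u) \<subseteq> good_core g (Suc k) c"
  unfolding good_core.simps by (rule UN_upper) (simp add: child_in_children)

lemma good_core_card: "level_good g k c \<Longrightarrow> k + 1 \<le> card (good_core g k c)"
proof (induction k arbitrary: c)
  case 0
  then show ?case by simp
next
  case (Suc k)
  let ?G = "\<lambda>u. level_good g k (child c u)"
  have "\<exists>u\<in>cells. \<exists>v\<in>cells. u \<noteq> v \<and> ?G u \<and> ?G v"
    by (rule at_most_one_bad_two_good[OF level_good_Suc_cells[OF Suc.prems], of "(0, 0)" "(0, 1)" "(0, 2)"])
      auto
  then obtain u v where uv: "u \<in> cells" "v \<in> cells" "u \<noteq> v" "?G u" "?G v"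
    by blast
  have "child c u \<noteq> child c v"
    using uv(3) by (simp add: inj_eq[OF inj_child])
  then have "good_core g k (child c u) \<inter> good_core g k (child c v) = {}"
    using disjoint_descendants good_core_subset_descendants by blast
  then have "card (good_core g k (child c u)) + card (good_core g k (child c v))
      = card (good_core g k (child c u) \<union> good_core g k (child c v))"
    by (simp add: card_Un_disjoint finite_good_core)
  also have "\<dots> \<le> card (good_core g (Suc k) c)"
    using good_core_child_subset[OF uv(1,4)] good_core_child_subset[OF uv(2,5)]
    by (intro card_mono finite_good_core) auto
  finally show ?case
    using Suc.IH[OF uv(4)] Suc.IH[OF uv(5)] by linarith
qed

lemma level_good_facing_children:
  fixes f f' :: "int \<Rightarrow> int \<times> int"
  assumes "level_good g (Suc k) d" "level_good g (Suc k) d'" "inj f" "inj f'"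
    "f ` {0..2} \<subseteq> cells" "f' ` {0..2} \<subseteq> cells"
  shows "\<exists>j\<in>{0..2}. level_good g k (child d (f j)) \<and> level_good g k (child d' (f' j))"
proof (rule at_most_one_bad_common_good)
  show "at_most_one_bad (\<lambda>j. level_good g k (child d (f j))) {0..2}"
    using at_most_one_bad_comp[OF level_good_Suc_cells[OF assms(1)] inj_on_subset[OF assms(3)] assms(5)]
    by simp
  show "at_most_one_bad (\<lambda>j. level_good g k (child d' (f' j))) {0..2}"
    using at_most_one_bad_comp[OF level_good_Suc_cells[OF assms(2)] inj_on_subset[OF assms(4)] assms(6)]
    by simp
qed

lemma good_cores_adjacent:
  assumes "level_good g k c" "level_good g k c'" "nn_adj c c'"
  shows "\<exists>a\<in>good_core g k c. \<exists>b\<in>good_core g k c'. nn_adj a b"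
  using assms
proof (induction k arbitrary: c c')
  case 0
  then show ?case by simp
next
  case (Suc k)
  have lift: "\<exists>a\<in>good_core g (Suc k) d. \<exists>b\<in>good_core g (Suc k) d'. nn_adj a b"
    if "u \<in> cells" "v \<in> cells" "level_good g k (child d u)" "level_good g k (child d' v)"
      "nn_adj (child d u) (child d' v)" for d d' u v
    using Suc.IH[OF that(3-5)] good_core_child_subset[OF that(1,3)]
      good_core_child_subset[OF that(2,4)] by blast
  have horizontal: "\<exists>a\<in>good_core g (Suc k) d. \<exists>b\<in>good_core g (Suc k) d'. nn_adj a b"
    if d: "level_good g (Suc k) d" "level_good g (Suc k) d'" "d' = (fst d + 1, snd d)" for d d'
  proof -
    have "\<exists>j\<in>{0..2}. level_good g k (child d (2, j)) \<and> level_good g k (child d' (0, j))"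
      by (rule level_good_facing_children[OF d(1,2)]) (auto simp: inj_def)
    then obtain j where "j \<in> {0..2}" "level_good g k (child d (2, j))" "level_good g k (child d' (0, j))"
      by blast
    then show ?thesis
      by (intro lift[of "(2, j)" "(0, j)"]) (auto simp: nn_adj_def child_def d(3))
  qed
  have vertical: "\<exists>a\<in>good_core g (Suc k) d. \<exists>b\<in>good_core g (Suc k) d'. nn_adj a b"
    if d: "level_good g (Suc k) d" "level_good g (Suc k) d'" "d' = (fst d, snd d + 1)" for d d'
  proof -
    have "\<exists>i\<in>{0..2}. level_good g k (child d (i, 2)) \<and> level_good g k (child d' (i, 0))"
      by (rule level_good_facing_children[OF d(1,2)]) (auto simp: inj_def)
    then obtain i where "i \<in> {0..2}" "level_good g k (child d (i, 2))" "level_good g k (child d' (i, 0))"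
      by blast
    then show ?thesis
      by (intro lift[of "(i, 2)" "(i, 0)"]) (auto simp: nn_adj_def child_def d(3))
  qed
  from Suc.prems(3) show ?case
  proof (cases rule: nn_adj_cases)
    case 1
    then show ?thesis by (rule horizontal[OF Suc.prems(1,2)])
  next
    case 2
    then show ?thesis using horizontal[OF Suc.prems(2,1)] by (blast intro: nn_adj_sym)
  next
    case 3
    then show ?thesis by (rule vertical[OF Suc.prems(1,2)])
  next
    case 4
    then show ?thesis using vertical[OF Suc.prems(2,1)] by (blast intro: nn_adj_sym)
  qed
qed

definition grid_adj :: "(int \<times> int \<Rightarrow> bool) \<Rightarrow> int \<times> int \<Rightarrow> int \<times> int \<Rightarrow> bool" where
  "grid_adj G u v \<longleftrightarrow> u \<in> cells \<and> v \<in> cells \<and> G u \<and> G v \<and> nn_adj u v"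

lemma symp_grid_adj: "symp (grid_adj G)"
  by (auto simp: symp_def grid_adj_def intro: nn_adj_sym)

lemma grid_adj_extend:
  assumes "(grid_adj G)\<^sup>*\<^sup>* h u" "u \<in> cells" "v \<in> cells" "G u" "G v" "nn_adj u v"
  shows "(grid_adj G)\<^sup>*\<^sup>* h v"
  using assms(1) by (rule rtranclp.rtrancl_into_rtrancl) (simp add: grid_adj_def assms(2-))

lemma cells_explicit: "cells = {0, 1, 2} \<times> {0, 1, 2}"
proof -
  have "{0..2::int} = {0, 1, 2}"
    by auto
  then show ?thesis
    by simp
qed

lemma grid_reach_from_centre:
  assumes "at_most_one_bad G cells" "G (1, 1)" "u \<in> cells" "G u"
  shows "(grid_adj G)\<^sup>*\<^sup>* (1, 1) u"
proof -
  have mid: "(grid_adj G)\<^sup>*\<^sup>* (1, 1) v" if "v \<in> {(0, 1), (1, 0), (2, 1), (1, 2)}" "G v" for v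
    using that by (auto intro!: grid_adj_extend[of _ _ "(1, 1)"] simp: assms(2) nn_adj_def)
  have corner: "(grid_adj G)\<^sup>*\<^sup>* (1, 1) (a, b)" if "a \<in> {0, 2}" "b \<in> {0, 2}" "G (a, b)" for a b
  proof -
    have "G (a, 1) \<or> G (1, b)"
      using at_most_one_badD[OF assms(1), of "(a, 1)" "(1, b)"] that(1,2) by auto
    then show ?thesis
    proof
      assume "G (a, 1)"
      with that show ?thesis
        by (intro grid_adj_extend[OF mid[of "(a, 1)"]]) (auto simp: nn_adj_def)
    next
      assume "G (1, b)"
      with that show ?thesis
        by (intro grid_adj_extend[OF mid[of "(1, b)"]]) (auto simp: nn_adj_def)
    qed
  qed
  show ?thesis
    using assms(3,4) mid corner by (auto simp: cells_explicit)
qed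

lemma grid_reach_around_ring:
  assumes good: "\<And>v. v \<in> cells \<Longrightarrow> v \<noteq> (1, 1) \<Longrightarrow> G v" and "u \<in> cells" "u \<noteq> (1, 1)"
  shows "(grid_adj G)\<^sup>*\<^sup>* (0, 0) u"
proof -
  let ?R = "(grid_adj G)\<^sup>*\<^sup>* (0, 0)"
  have step: "?R w" if "?R v" "v \<in> cells - {(1, 1)}" "w \<in> cells - {(1, 1)}" "nn_adj v w" for v w
    by (rule grid_adj_extend[OF that(1)]) (use that good in auto)
  have "?R (0, 1)" by (rule step[of "(0, 0)"]) (auto simp: nn_adj_def)
  moreover from this have "?R (0, 2)" by (rule step) (auto simp: nn_adj_def)
  moreover from this have "?R (1, 2)" by (rule step) (auto simp: nn_adj_def)
  moreover from this have "?R (2, 2)" by (rule step) (auto simp: nn_adj_def)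
  moreover from this have "?R (2, 1)" by (rule step) (auto simp: nn_adj_def)
  moreover from this have "?R (2, 0)" by (rule step) (auto simp: nn_adj_def)
  moreover from this have "?R (1, 0)" by (rule step) (auto simp: nn_adj_def)
  ultimately show ?thesis
    using assms(2,3) by (auto simp: cells_explicit)
qed

lemma grid_connected:
  assumes "at_most_one_bad G cells" "u \<in> cells" "v \<in> cells" "G u" "G v"
  shows "(grid_adj G)\<^sup>*\<^sup>* u v"
proof -
  obtain h where h: "\<And>w. w \<in> cells \<Longrightarrow> G w \<Longrightarrow> (grid_adj G)\<^sup>*\<^sup>* h w"
  proof (cases "G (1, 1)")
    case True
    then show ?thesis
      using that grid_reach_from_centre[OF assms(1)] by blast
  next
    case False
    have good: "G w" if "w \<in> cells" "w \<noteq> (1, 1)" for w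
      using at_most_one_badD[OF assms(1) that(1), of "(1, 1)"] that(2) False by auto
    show ?thesis
    proof (rule that)
      fix w
      assume "w \<in> cells" "G w"
      moreover from \<open>G w\<close> False have "w \<noteq> (1, 1)"
        by auto
      ultimately show "(grid_adj G)\<^sup>*\<^sup>* (0, 0) w"
        by (intro grid_reach_around_ring[OF good])
    qed
  qed
  have "(grid_adj G)\<^sup>*\<^sup>* u h"
    using sympD[OF symp_rtranclp[OF symp_grid_adj] h[OF assms(2,4)]] .
  also have "(grid_adj G)\<^sup>*\<^sup>* h v"
    using h[OF assms(3,5)] .
  finally show ?thesis .
qed

lemma good_core_connected:
  "level_good g k c \<Longrightarrow> a \<in> good_core g k c \<Longrightarrow> b \<in> good_core g k c \<Longrightarrow> (good_adj g)\<^sup>*\<^sup>* a b"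
proof (induction k arbitrary: c a b)
  case 0
  then show ?case by simp
next
  case (Suc k)
  let ?G = "\<lambda>u. level_good g k (child c u)"
  have chain: "(good_adj g)\<^sup>*\<^sup>* a b"
    if "(grid_adj ?G)\<^sup>*\<^sup>* u v" "?G u" "a \<in> good_core g k (child c u)" "b \<in> good_core g k (child c v)"
    for u v a b
    using that
  proof (induction arbitrary: b rule: rtranclp_induct)
    case base
    then show ?case using Suc.IH by blast
  next
    case (step v w)
    from step.hyps(2) have vw: "?G v" "?G w" "nn_adj (child c v) (child c w)"
      by (auto simp: grid_adj_def nn_adj_child_iff)
    then obtain a' b' where a'b': "a' \<in> good_core g k (child c v)" "b' \<in> good_core g k (child c w)"
      "nn_adj a' b'"
      using good_cores_adjacent by blast
    have "(good_adj g)\<^sup>*\<^sup>* a a'"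
      using step.IH step.prems a'b'(1) by blast
    also have "good_adj g a' b'"
      using a'b' good_core_good vw(1,2) by blast
    also have "(good_adj g)\<^sup>*\<^sup>* b' b"
      using Suc.IH vw(2) a'b'(2) step.prems(3) by blast
    finally show ?case .
  qed
  from Suc.prems obtain u v where "u \<in> cells" "v \<in> cells" "?G u" "?G v"
    "a \<in> good_core g k (child c u)" "b \<in> good_core g k (child c v)"
    by (auto simp: children_def)
  then show ?case
    using chain grid_connected[OF level_good_Suc_cells[OF Suc.prems(1)]] by blast
qed

section \<open>Independence under the product law\<close>

type_synonym sample = "(site \<Rightarrow> bool) \<times> (site \<Rightarrow> bool)"

abbreviation bernoulli_field :: "real \<Rightarrow> (site \<Rightarrow> bool) measure" where
  "bernoulli_field p \<equiv> PiM UNIV (\<lambda>_. measure_pmf (bernoulli_pmf p))"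

lemma joint_law_eq: "joint_law p q = bernoulli_field p \<Otimes>\<^sub>M bernoulli_field q"
  by (simp add: joint_law_def env_law_def config_law_def)

lemma prob_space_bernoulli_field: "prob_space (bernoulli_field p)"
  by (intro prob_space_PiM prob_space_measure_pmf)

lemma prob_space_joint_law: "prob_space (joint_law p q)"
  unfolding joint_law_eq by (intro prob_space_pair prob_space_bernoulli_field)

lemma space_joint_law: "space (joint_law p q) = UNIV"
  by (simp add: joint_law_eq space_pair_measure space_PiM)

lemma bernoulli_field_Collect:
  assumes "finite S"
  shows "{\<omega>. \<forall>x\<in>S. \<omega> x \<in> X x} \<in> sets (bernoulli_field p)"
    and "emeasure (bernoulli_field p) {\<omega>. \<forall>x\<in>S. \<omega> x \<in> X x}
           = (\<Prod>x\<in>S. emeasure (measure_pmf (bernoulli_pmf p)) (X x))"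
proof -
  interpret product_prob_space "\<lambda>_::site. measure_pmf (bernoulli_pmf p)" "UNIV :: site set"
    by unfold_locales
  have eq: "{\<omega>. \<forall>x\<in>S. \<omega> x \<in> X x} = {\<omega>\<in>space (bernoulli_field p). \<forall>x\<in>S. \<omega> x \<in> X x}"
    by (simp add: space_PiM)
  show "{\<omega>. \<forall>x\<in>S. \<omega> x \<in> X x} \<in> sets (bernoulli_field p)"
    unfolding eq using assms by measurable
  show "emeasure (bernoulli_field p) {\<omega>. \<forall>x\<in>S. \<omega> x \<in> X x}
      = (\<Prod>x\<in>S. emeasure (measure_pmf (bernoulli_pmf p)) (X x))"
    unfolding eq by (rule emeasure_PiM_Collect) (use assms in auto)
qed

definition cylinder :: "site set \<Rightarrow> (site \<Rightarrow> bool set) \<Rightarrow> (site \<Rightarrow> bool set) \<Rightarrow> sample set" where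
  "cylinder S X Y = {w. \<forall>x\<in>S. fst w x \<in> X x \<and> snd w x \<in> Y x}"

lemma cylinder_eq_Times:
  "cylinder S X Y = {\<omega>. \<forall>x\<in>S. \<omega> x \<in> X x} \<times> {\<omega>. \<forall>x\<in>S. \<omega> x \<in> Y x}"
  by (auto simp: cylinder_def)

lemma sets_cylinder: "finite S \<Longrightarrow> cylinder S X Y \<in> sets (joint_law p q)"
  unfolding cylinder_eq_Times joint_law_eq
  by (intro pair_measureI bernoulli_field_Collect(1))

lemma measure_cylinder:
  assumes "finite S"
  shows "measure (joint_law p q) (cylinder S X Y) =
    (\<Prod>x\<in>S. measure (measure_pmf (bernoulli_pmf p)) (X x) * measure (measure_pmf (bernoulli_pmf q)) (Y x))"
proof -
  interpret Q: prob_space "bernoulli_field q"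
    by (rule prob_space_bernoulli_field)
  interpret J: prob_space "joint_law p q"
    by (rule prob_space_joint_law)
  have "emeasure (joint_law p q) (cylinder S X Y) =
      emeasure (bernoulli_field p) {\<omega>. \<forall>x\<in>S. \<omega> x \<in> X x} * emeasure (bernoulli_field q) {\<omega>. \<forall>x\<in>S. \<omega> x \<in> Y x}"
    unfolding cylinder_eq_Times joint_law_eq
    by (rule Q.emeasure_pair_measure_Times) (rule bernoulli_field_Collect(1)[OF assms])+
  also have "\<dots> = ennreal (\<Prod>x\<in>S. measure (measure_pmf (bernoulli_pmf p)) (X x) *
                                   measure (measure_pmf (bernoulli_pmf q)) (Y x))"
    by (simp add: bernoulli_field_Collect(2)[OF assms] measure_pmf.emeasure_eq_measure
        prod_ennreal prod.distrib ennreal_mult'' prod_nonneg)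
  finally show ?thesis
    by (simp add: J.emeasure_eq_measure prod_nonneg)
qed

lemma measure_cylinder_Int:
  assumes "finite A" "finite B" "A \<inter> B = {}"
  shows "measure (joint_law p q) (cylinder A X Y \<inter> cylinder B X' Y')
    = measure (joint_law p q) (cylinder A X Y) * measure (joint_law p q) (cylinder B X' Y')"
proof -
  let ?m = "\<lambda>X Y x. measure (measure_pmf (bernoulli_pmf p)) (X x) * measure (measure_pmf (bernoulli_pmf q)) (Y x)"
  let ?X = "\<lambda>x. if x \<in> A then X x else X' x" and ?Y = "\<lambda>x. if x \<in> A then Y x else Y' x"
  have "cylinder A X Y \<inter> cylinder B X' Y' = cylinder (A \<union> B) ?X ?Y"
    using assms(3) by (auto simp: cylinder_def)
  then have "measure (joint_law p q) (cylinder A X Y \<inter> cylinder B X' Y') = (\<Prod>x\<in>A \<union> B. ?m ?X ?Y x)"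
    using assms(1,2) by (simp add: measure_cylinder)
  also have "\<dots> = (\<Prod>x\<in>A. ?m X Y x) * (\<Prod>x\<in>B. ?m X' Y' x)"
    unfolding prod.union_disjoint[OF assms] using assms(3)
    by (intro arg_cong2[where f = "(*)"] prod.cong) auto
  finally show ?thesis
    using assms(1,2) by (simp add: measure_cylinder)
qed

definition depends_on :: "site set \<Rightarrow> sample set \<Rightarrow> bool" where
  "depends_on A E \<longleftrightarrow>
     (\<forall>w w'. (\<forall>x\<in>A. fst w x = fst w' x \<and> snd w x = snd w' x) \<longrightarrow> w \<in> E \<longrightarrow> w' \<in> E)"

lemma depends_onD:
  "depends_on A E \<Longrightarrow> w \<in> E \<Longrightarrow> (\<And>x. x \<in> A \<Longrightarrow> fst w x = fst w' x \<and> snd w x = snd w' x) \<Longrightarrow> w' \<in> E"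
  unfolding depends_on_def by blast

definition agrees_on :: "site set \<Rightarrow> sample \<Rightarrow> sample set" where
  "agrees_on A w = cylinder A (\<lambda>x. {fst w x}) (\<lambda>x. {snd w x})"

definition vanishes_outside :: "site set \<Rightarrow> sample \<Rightarrow> bool" where
  "vanishes_outside A w \<longleftrightarrow> (\<forall>x. x \<notin> A \<longrightarrow> \<not> fst w x \<and> \<not> snd w x)"

lemma finite_vanishes_outside: "finite A \<Longrightarrow> finite (Collect (vanishes_outside A))"
proof -
  assume "finite A"
  let ?ind = "\<lambda>(S, T). ((\<lambda>x. x \<in> S), (\<lambda>x. x \<in> T))"
  have "Collect (vanishes_outside A) \<subseteq> ?ind ` (Pow A \<times> Pow A)"
  proof
    fix w
    assume "w \<in> Collect (vanishes_outside A)"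
    then have "w = ?ind ({x\<in>A. fst w x}, {x\<in>A. snd w x})"
      by (auto simp: vanishes_outside_def fun_eq_iff prod_eq_iff)
    then show "w \<in> ?ind ` (Pow A \<times> Pow A)"
      by (rule image_eqI) auto
  qed
  with \<open>finite A\<close> show ?thesis
    by (blast intro: finite_subset)
qed

(* An event depending only on the finite set A is the disjoint union of the cylinders fixing all
   sites of A; each cylinder is represented by its unique sample vanishing outside A. *)
lemma depends_on_eq_UN:
  assumes "depends_on A E"
  shows "E = (\<Union>w\<in>{w\<in>E. vanishes_outside A w}. agrees_on A w)"
proof (intro equalityI subsetI)
  fix w
  assume "w \<in> E"
  define w0 where "w0 = ((\<lambda>x. x \<in> A \<and> fst w x), (\<lambda>x. x \<in> A \<and> snd w x))"
  have "w0 \<in> E"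
    by (rule depends_onD[OF assms \<open>w \<in> E\<close>]) (simp add: w0_def)
  moreover have "vanishes_outside A w0" "w \<in> agrees_on A w0"
    by (auto simp: w0_def vanishes_outside_def agrees_on_def cylinder_def)
  ultimately show "w \<in> (\<Union>w\<in>{w\<in>E. vanishes_outside A w}. agrees_on A w)"
    by blast
next
  fix w
  assume "w \<in> (\<Union>w\<in>{w\<in>E. vanishes_outside A w}. agrees_on A w)"
  then obtain w0 where w0: "w0 \<in> E" "w \<in> agrees_on A w0"
    by blast
  show "w \<in> E"
    by (rule depends_onD[OF assms w0(1)]) (use w0(2) in \<open>simp add: agrees_on_def cylinder_def\<close>)
qed

lemma disjoint_agrees_on:
  assumes "vanishes_outside A w" "vanishes_outside A w'" "w \<noteq> w'"
  shows "agrees_on A w \<inter> agrees_on A w' = {}"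
proof (rule ccontr)
  assume "agrees_on A w \<inter> agrees_on A w' \<noteq> {}"
  then have agree: "\<forall>x\<in>A. fst w x = fst w' x \<and> snd w x = snd w' x"
    by (auto simp: agrees_on_def cylinder_def)
  have "fst w x = fst w' x \<and> snd w x = snd w' x" for x
    using agree assms(1,2) unfolding vanishes_outside_def by (cases "x \<in> A") blast+
  then have "w = w'"
    by (simp add: prod_eq_iff fun_eq_iff)
  with assms(3) show False ..
qed

lemma disjoint_family_agrees_on: "disjoint_family_on (agrees_on A) {w\<in>E. vanishes_outside A w}"
  unfolding disjoint_family_on_def using disjoint_agrees_on by blast

lemma sets_agrees_on: "finite A \<Longrightarrow> agrees_on A w \<in> sets (joint_law p q)"
  by (simp add: agrees_on_def sets_cylinder)

lemma sets_depends_on: "finite A \<Longrightarrow> depends_on A E \<Longrightarrow> E \<in> sets (joint_law p q)"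
  by (subst depends_on_eq_UN) (auto intro!: finite_vanishes_outside sets_agrees_on)

lemma measure_depends_on:
  assumes "finite A" "depends_on A E"
  shows "measure (joint_law p q) E
    = (\<Sum>w\<in>{w\<in>E. vanishes_outside A w}. measure (joint_law p q) (agrees_on A w))"
proof -
  interpret J: prob_space "joint_law p q"
    by (rule prob_space_joint_law)
  show ?thesis
    by (subst depends_on_eq_UN[OF assms(2)], rule J.finite_measure_finite_Union)
      (auto simp: sets_agrees_on disjoint_family_agrees_on assms(1) finite_vanishes_outside)
qed

lemma measure_Int_depends_on:
  assumes A: "finite A" "depends_on A E" and B: "finite B" "depends_on B F" and "A \<inter> B = {}"
  shows "measure (joint_law p q) (E \<inter> F) = measure (joint_law p q) E * measure (joint_law p q) F"
proof -
  interpret J: prob_space "joint_law p q"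
    by (rule prob_space_joint_law)
  let ?\<mu> = "measure (joint_law p q)"
  let ?RE = "{w\<in>E. vanishes_outside A w}" and ?RF = "{w\<in>F. vanishes_outside B w}"
  have fin: "finite (?RE \<times> ?RF)"
    using finite_vanishes_outside A(1) B(1) by (auto intro: finite_subset)
  have "E \<inter> F = (\<Union>(w, w')\<in>?RE \<times> ?RF. agrees_on A w \<inter> agrees_on B w')"
    by (subst depends_on_eq_UN[OF A(2)], subst depends_on_eq_UN[OF B(2)]) blast
  moreover have "disjoint_family_on (\<lambda>(w, w'). agrees_on A w \<inter> agrees_on B w') (?RE \<times> ?RF)"
    using disjoint_family_agrees_on[of A E] disjoint_family_agrees_on[of B F]
    unfolding disjoint_family_on_def by fast
  ultimately have "?\<mu> (E \<inter> F) = (\<Sum>(w, w')\<in>?RE \<times> ?RF. ?\<mu> (agrees_on A w \<inter> agrees_on B w'))"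
    using fin A(1) B(1)
    by (simp only:, subst J.finite_measure_finite_Union) (auto simp: sets_agrees_on case_prod_beta)
  also have "\<dots> = (\<Sum>(w, w')\<in>?RE \<times> ?RF. ?\<mu> (agrees_on A w) * ?\<mu> (agrees_on B w'))"
    unfolding agrees_on_def using A(1) B(1) assms(5) by (simp add: measure_cylinder_Int)
  also have "\<dots> = (\<Sum>w\<in>?RE. ?\<mu> (agrees_on A w)) * (\<Sum>w'\<in>?RF. ?\<mu> (agrees_on B w'))"
    by (simp add: sum_product sum.cartesian_product case_prod_beta)
  also have "\<dots> = ?\<mu> E * ?\<mu> F"
    by (simp only: measure_depends_on[OF A] measure_depends_on[OF B])
  finally show ?thesis .
qed

section \<open>Probability of bad blocks\<close>

abbreviation good_box_of :: "nat \<Rightarrow> sample \<Rightarrow> site \<Rightarrow> bool" where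
  "good_box_of L w \<equiv> good_box L (fst w) (snd w)"

definition bad_event :: "nat \<Rightarrow> nat \<Rightarrow> site \<Rightarrow> sample set" where
  "bad_event L k c = {w. \<not> level_good (good_box_of L w) k c}"

definition block_sites :: "nat \<Rightarrow> nat \<Rightarrow> site \<Rightarrow> site set" where
  "block_sites L k c = (\<Union>a\<in>descendants k c. box L a)"

definition box_row :: "nat \<Rightarrow> site \<Rightarrow> int \<Rightarrow> site set" where
  "box_row L a j = (\<lambda>i. (int L * fst a + i, int L * snd a + j)) ` {1..int L}"

definition box_column :: "nat \<Rightarrow> site \<Rightarrow> int \<Rightarrow> site set" where
  "box_column L a i = (\<lambda>j. (int L * fst a + i, int L * snd a + j)) ` {1..int L}"

lemma box_eq_image:
  "box L a = (\<lambda>(i, j). (int L * fst a + i, int L * snd a + j)) ` ({1..int L} \<times> {1..int L})"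
  by (auto simp: box_def)

lemma finite_box: "finite (box L a)"
  by (simp add: box_eq_image)

lemma card_box: "card (box L a) = L * L"
  by (simp add: box_eq_image card_image inj_on_def card_cartesian_product)

lemma finite_box_row: "finite (box_row L a j)" and finite_box_column: "finite (box_column L a i)"
  by (simp_all add: box_row_def box_column_def)

lemma card_box_row: "card (box_row L a j) = L" and card_box_column: "card (box_column L a i) = L"
  by (simp_all add: box_row_def box_column_def card_image inj_on_def)

lemma box_index:
  assumes "L > 0" "x \<in> box L a"
  shows "((fst x - 1) div int L, (snd x - 1) div int L) = a"
proof -
  obtain i j where x: "x = (int L * fst a + i, int L * snd a + j)" "i \<in> {1..int L}" "j \<in> {1..int L}"
    using assms(2) by (auto simp: box_def)
  have "(int L * b + r) div int L = b" if "r \<in> {0..<int L}" for b r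
    using assms(1) that by simp
  from this[of "i - 1" "fst a"] this[of "j - 1" "snd a"] x show ?thesis
    by (simp add: algebra_simps prod_eq_iff)
qed

lemma disjoint_boxes: "L > 0 \<Longrightarrow> a \<noteq> b \<Longrightarrow> box L a \<inter> box L b = {}"
  using box_index by blast

lemma finite_block_sites: "finite (block_sites L k c)"
  by (simp add: block_sites_def finite_descendants finite_box)

lemma disjoint_block_sites:
  assumes "L > 0" "c \<noteq> c'"
  shows "block_sites L k c \<inter> block_sites L k c' = {}"
proof -
  have "box L a \<inter> box L b = {}" if "a \<in> descendants k c" "b \<in> descendants k c'" for a b
  proof (rule disjoint_boxes[OF assms(1)])
    show "a \<noteq> b"
      using disjoint_descendants[OF assms(2), of k] that by blast
  qed
  then show ?thesis
    unfolding block_sites_def by blast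
qed

lemma block_sites_child_subset: "s \<in> children c \<Longrightarrow> block_sites L k s \<subseteq> block_sites L (Suc k) c"
  by (auto simp: block_sites_def)

lemma good_box_cong:
  assumes "\<And>x. x \<in> box L a \<Longrightarrow> fst w x = fst w' x \<and> snd w x = snd w' x"
  shows "good_box_of L w a \<longleftrightarrow> good_box_of L w' a"
proof -
  have immune: "(\<forall>x\<in>box L a. \<not> fst w x) \<longleftrightarrow> (\<forall>x\<in>box L a. \<not> fst w' x)"
    using assms by auto
  have "snd w (int L * fst a + i, int L * snd a + j) = snd w' (int L * fst a + i, int L * snd a + j)"
    if "i \<in> {1..int L}" "j \<in> {1..int L}" for i j
    using assms[of "(int L * fst a + i, int L * snd a + j)"] that by (auto simp: box_def)
  then show ?thesis
    unfolding good_box_def immune by (intro conj_cong refl ball_cong bex_cong) simp_all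
qed

lemma level_good_cong:
  "(\<And>x. x \<in> block_sites L k c \<Longrightarrow> fst w x = fst w' x \<and> snd w x = snd w' x)
    \<Longrightarrow> level_good (good_box_of L w) k c \<longleftrightarrow> level_good (good_box_of L w') k c"
proof (induction k arbitrary: c)
  case 0
  then show ?case
    using good_box_cong[of L c w w'] by (simp add: block_sites_def)
next
  case (Suc k)
  have "level_good (good_box_of L w) k s \<longleftrightarrow> level_good (good_box_of L w') k s" if "s \<in> children c" for s
    using Suc.IH Suc.prems block_sites_child_subset[OF that] by blast
  then show ?case
    by (simp add: at_most_one_bad_def)
qed

lemma depends_on_bad_event: "depends_on (block_sites L k c) (bad_event L k c)"
  unfolding depends_on_def bad_event_def using level_good_cong by blast

lemma sets_bad_event: "bad_event L k c \<in> sets (joint_law p q)"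
  by (rule sets_depends_on[OF finite_block_sites depends_on_bad_event])

lemma measure_bad_event_Suc:
  assumes "L > 0" and b: "\<And>s. measure (joint_law p q) (bad_event L k s) \<le> b"
  shows "measure (joint_law p q) (bad_event L (Suc k) c) \<le> 81 * b\<^sup>2"
proof -
  interpret J: prob_space "joint_law p q"
    by (rule prob_space_joint_law)
  let ?\<mu> = "measure (joint_law p q)" and ?B = "bad_event L k"
  let ?pairs = "{(s, t) \<in> children c \<times> children c. s \<noteq> t}"
  have pairs: "finite ?pairs" "card ?pairs \<le> 81"
    using card_mono[of "children c \<times> children c" ?pairs]
    by (auto simp: finite_children card_children card_cartesian_product intro: finite_subset)
  have "0 \<le> b"
    using b[of c] measure_nonneg order_trans by blast
  have "bad_event L (Suc k) c \<subseteq> (\<Union>(s, t)\<in>?pairs. ?B s \<inter> ?B t)"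
    by (auto simp: bad_event_def at_most_one_bad_def)
  then have "?\<mu> (bad_event L (Suc k) c) \<le> ?\<mu> (\<Union>(s, t)\<in>?pairs. ?B s \<inter> ?B t)"
    using pairs(1) by (intro J.finite_measure_mono) (auto intro!: sets_bad_event)
  also have "\<dots> \<le> (\<Sum>(s, t)\<in>?pairs. ?\<mu> (?B s \<inter> ?B t))"
    using measure_UNION_le[OF pairs(1), of "\<lambda>(s, t). ?B s \<inter> ?B t" "joint_law p q"]
    by (simp add: case_prod_beta sets_bad_event sets.Int)
  also have "\<dots> = (\<Sum>(s, t)\<in>?pairs. ?\<mu> (?B s) * ?\<mu> (?B t))"
  proof -
    have "?\<mu> (?B s \<inter> ?B t) = ?\<mu> (?B s) * ?\<mu> (?B t)" if "s \<noteq> t" for s t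
      by (rule measure_Int_depends_on[OF finite_block_sites depends_on_bad_event
            finite_block_sites depends_on_bad_event disjoint_block_sites[OF assms(1) that]])
    then show ?thesis
      by (intro sum.cong refl) auto
  qed
  also have "\<dots> \<le> real (card ?pairs) * (b * b)"
    by (rule sum_bounded_above) (auto intro!: mult_mono b \<open>0 \<le> b\<close>)
  also have "\<dots> \<le> 81 * b\<^sup>2"
    using pairs(2) \<open>0 \<le> b\<close> by (simp add: power2_eq_square mult_right_mono)
  finally show ?thesis .
qed

lemma measure_bad_event_le:
  assumes "L > 0" "0 \<le> d" "162 * d \<le> 1"
    and base: "\<And>s. measure (joint_law p q) (bad_event L 0 s) \<le> d"
  shows "measure (joint_law p q) (bad_event L k c) \<le> d * (1/2) ^ k"
proof (induction k arbitrary: c)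
  case 0
  then show ?case using base by simp
next
  case (Suc k)
  have "measure (joint_law p q) (bad_event L (Suc k) c) \<le> 81 * (d * (1/2) ^ k)\<^sup>2"
    by (rule measure_bad_event_Suc[OF assms(1) Suc.IH])
  also have "\<dots> = (81 * d) * (1/2) ^ k * (d * (1/2) ^ k)"
    by (simp add: power2_eq_square)
  also have "\<dots> \<le> (1/2) * 1 * (d * (1/2) ^ k)"
    using assms(2,3) by (intro mult_mono power_le_one) auto
  finally show ?case
    by simp
qed

lemma measure_immune_site:
  "0 \<le> p \<Longrightarrow> p \<le> 1 \<Longrightarrow> measure (joint_law p q) (cylinder {x} (\<lambda>_. {True}) (\<lambda>_. UNIV)) = p"
  by (simp add: measure_cylinder measure_pmf_single)

lemma measure_all_healthy:
  "finite S \<Longrightarrow> 0 \<le> q \<Longrightarrow> q \<le> 1 \<Longrightarrow>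
    measure (joint_law p q) (cylinder S (\<lambda>_. UNIV) (\<lambda>_. {False})) = (1 - q) ^ card S"
  by (simp add: measure_cylinder measure_pmf_single)

lemma measure_bad_event_0:
  assumes "0 \<le> p" "p \<le> 1" "0 \<le> q" "q \<le> 1"
  shows "measure (joint_law p q) (bad_event L 0 c) \<le> real L * real L * p + 2 * real L * (1 - q) ^ L"
proof -
  interpret J: prob_space "joint_law p q"
    by (rule prob_space_joint_law)
  let ?\<mu> = "measure (joint_law p q)"
  let ?immune = "\<Union>x\<in>box L c. cylinder {x} (\<lambda>_. {True}) (\<lambda>_. UNIV)"
  let ?row = "\<Union>j\<in>{1..int L}. cylinder (box_row L c j) (\<lambda>_. UNIV) (\<lambda>_. {False})"
  let ?column = "\<Union>i\<in>{1..int L}. cylinder (box_column L c i) (\<lambda>_. UNIV) (\<lambda>_. {False})"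
  have sets: "?immune \<in> sets (joint_law p q)" "?row \<in> sets (joint_law p q)"
      "?column \<in> sets (joint_law p q)"
    by (auto intro!: sets_cylinder finite_box finite_box_row finite_box_column)
  have "bad_event L 0 c \<subseteq> ?immune \<union> ?row \<union> ?column"
    by (auto simp: bad_event_def good_box_def cylinder_def box_row_def box_column_def)
  then have "?\<mu> (bad_event L 0 c) \<le> ?\<mu> ?immune + ?\<mu> ?row + ?\<mu> ?column"
    using sets measure_Un_le[of ?immune "joint_law p q" ?row]
      measure_Un_le[of "?immune \<union> ?row" "joint_law p q" ?column]
      J.finite_measure_mono[of "bad_event L 0 c" "?immune \<union> ?row \<union> ?column"]
    by (simp add: sets.Un)
  also have "?\<mu> ?immune \<le> real L * real L * p"
    using measure_UNION_le[of "box L c" "\<lambda>x. cylinder {x} (\<lambda>_. {True}) (\<lambda>_. UNIV)" "joint_law p q"]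
    by (simp add: finite_box sets_cylinder measure_immune_site assms card_box)
  also have "?\<mu> ?row \<le> real L * (1 - q) ^ L"
    using measure_UNION_le[of "{1..int L}" "\<lambda>j. cylinder (box_row L c j) (\<lambda>_. UNIV) (\<lambda>_. {False})"
        "joint_law p q"]
    by (simp add: finite_box_row sets_cylinder measure_all_healthy assms card_box_row)
  also have "?\<mu> ?column \<le> real L * (1 - q) ^ L"
    using measure_UNION_le[of "{1..int L}" "\<lambda>i. cylinder (box_column L c i) (\<lambda>_. UNIV) (\<lambda>_. {False})"
        "joint_law p q"]
    by (simp add: finite_box_column sets_cylinder measure_all_healthy assms card_box_column)
  finally show ?thesis
    by simp
qed

section \<open>The percolation event\<close>

lemma sets_good_box_event: "{w. good_box_of L w a} \<in> sets (joint_law p q)"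
proof -
  have "depends_on (box L a) {w. good_box_of L w a}"
    unfolding depends_on_def using good_box_cong by blast
  then show ?thesis
    by (rule sets_depends_on[OF finite_box])
qed

lemma sets_good_path_event: "{w. (good_adj (good_box_of L w))\<^sup>*\<^sup>* x y} \<in> sets (joint_law p q)"
proof -
  have "{w. (good_adj (good_box_of L w) ^^ n) x y} \<in> sets (joint_law p q)" for n
  proof (induction n arbitrary: y)
    case 0
    show ?case
      using sets.top[of "joint_law p q"] by (cases "x = y") (simp_all add: space_joint_law)
  next
    case (Suc n)
    have "{w. (good_adj (good_box_of L w) ^^ Suc n) x y} =
        (\<Union>z\<in>{z. nn_adj z y}. {w. (good_adj (good_box_of L w) ^^ n) x z} \<inter>
          {w. good_box_of L w z} \<inter> {w. good_box_of L w y})"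
      by (auto simp: relcompp_apply)
    then show ?case
      by (auto intro!: sets.countable_UN''[OF countableI_type] Suc.IH sets_good_box_event)
  qed
  moreover have "{w. (good_adj (good_box_of L w))\<^sup>*\<^sup>* x y} = (\<Union>n. {w. (good_adj (good_box_of L w) ^^ n) x y})"
    by (auto simp: rtranclp_power)
  ultimately show ?thesis
    by (auto intro!: sets.countable_UN''[OF countableI_type])
qed

lemma finite_int_pairs_iff_bounded:
  "finite (S :: (int \<times> int) set) \<longleftrightarrow> (\<exists>n. S \<subseteq> {-n..n} \<times> {-n..n})"
proof
  assume "finite S"
  then obtain n1 n2 where "abs ` fst ` S \<subseteq> {..n1}" "abs ` snd ` S \<subseteq> {..n2}"
    by (meson finite_imageI finite_int_iff_bounded_le)
  then have "S \<subseteq> {-max n1 n2..max n1 n2} \<times> {-max n1 n2..max n1 n2}"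
    by (force simp: abs_le_iff)
  then show "\<exists>n. S \<subseteq> {-n..n} \<times> {-n..n}" ..
next
  assume "\<exists>n. S \<subseteq> {-n..n} \<times> {-n..n}"
  then show "finite S"
    by (auto intro: finite_subset)
qed

lemma infinite_int_pairs_iff_unbounded:
  "infinite (S :: (int \<times> int) set) \<longleftrightarrow> (\<forall>n. \<exists>y\<in>- ({-n..n} \<times> {-n..n}). y \<in> S)"
  unfolding finite_int_pairs_iff_bounded by blast

lemma origin_in_infinite_cluster_iff:
  "origin_in_infinite_cluster L omega eta \<longleftrightarrow>
    (\<exists>xh. (0, 0) \<in> box L xh \<and> good_box L omega eta xh \<and>
      (\<forall>n. \<exists>y\<in>- ({-n..n} \<times> {-n..n}). (good_adj (good_box L omega eta))\<^sup>*\<^sup>* xh y))"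
proof -
  have cluster_iff: "infinite (good_cluster L omega eta xh) \<longleftrightarrow>
      (\<forall>n. \<exists>y\<in>- ({-n..n} \<times> {-n..n}). (good_adj (good_box L omega eta))\<^sup>*\<^sup>* xh y)"
    if "good_box L omega eta xh" for xh
    using that unfolding good_cluster_def infinite_int_pairs_iff_unbounded by simp
  show ?thesis
    unfolding origin_in_infinite_cluster_def
    by (intro ex_cong1 conj_cong refl) (simp add: cluster_iff)
qed

lemma sets_origin_in_infinite_cluster:
  "{(omega, eta). origin_in_infinite_cluster L omega eta} \<in> sets (joint_law p q)"
proof -
  have "{(omega, eta). origin_in_infinite_cluster L omega eta} =
    (\<Union>xh\<in>{xh. (0, 0) \<in> box L xh}. {w. good_box_of L w xh} \<inter>
       (\<Inter>n. \<Union>y\<in>- ({-n..n} \<times> {-n..n}). {w. (good_adj (good_box_of L w))\<^sup>*\<^sup>* xh y}))"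
    by (rule set_eqI) (simp add: origin_in_infinite_cluster_iff case_prod_beta)
  moreover have "UNIV \<in> sets (joint_law p q)"
    using sets.top[of "joint_law p q"] by (simp add: space_joint_law)
  ultimately show ?thesis
    by (auto intro!: sets.countable_UN''[OF countableI_type] sets_good_box_event
        sets.countable_INT''[OF _ countableI_type] sets_good_path_event)
qed

lemma origin_in_infinite_cluster_if_level_good:
  assumes "L > 0" and good: "\<And>k. level_good (good_box_of L w) k (-1, -1)"
  shows "origin_in_infinite_cluster L (fst w) (snd w)"
proof -
  let ?g = "good_box_of L w" and ?o = "(-1, -1) :: site"
  let ?cluster = "{y. (good_adj ?g)\<^sup>*\<^sup>* ?o y}"
  \<comment> \<open>the box containing the origin is its own bottom-right child at every level\<close>
  have self_child: "child ?o (2, 2) = ?o"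
    by (simp add: child_def)
  have origin_core: "?o \<in> good_core ?g k ?o" for k
  proof (induction k)
    case 0
    show ?case by simp
  next
    case (Suc k)
    have "good_core ?g k ?o \<subseteq> good_core ?g (Suc k) ?o"
      using good_core_child_subset[of "(2, 2)" ?g k ?o] self_child good by simp
    with Suc.IH show ?case
      by blast
  qed
  have core_subset: "good_core ?g k ?o \<subseteq> ?cluster" for k
    using good_core_connected[OF good origin_core] by blast
  have "infinite ?cluster"
  proof
    assume "finite ?cluster"
    then have "card (good_core ?g (card ?cluster) ?o) \<le> card ?cluster"
      using core_subset by (rule card_mono)
    with good_core_card[OF good, of "card ?cluster"] show False
      by simp
  qed
  moreover have "(0, 0) \<in> box L ?o"
    using assms(1) by (auto simp: box_eq_image image_iff intro!: bexI[of _ "(int L, int L)"])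
  ultimately show ?thesis
    unfolding origin_in_infinite_cluster_def good_cluster_def using good[of 0] by auto
qed

lemma measure_origin_in_infinite_cluster_ge:
  fixes L :: nat and p q :: real
  defines "d \<equiv> real L * real L * p + 2 * real L * (1 - q) ^ L"
  assumes "L > 0" "0 \<le> p" "p \<le> 1" "0 \<le> q" "q \<le> 1" "162 * d \<le> 1"
  shows "1 - 2 * d \<le> measure (joint_law p q) {(omega, eta). origin_in_infinite_cluster L omega eta}"
proof -
  interpret J: prob_space "joint_law p q"
    by (rule prob_space_joint_law)
  let ?\<mu> = "measure (joint_law p q)" and ?B = "\<lambda>k. bad_event L k (-1, -1)"
  have bound: "?\<mu> (?B k) \<le> d * (1/2) ^ k" for k
    using assms(2-7) measure_bad_event_0[OF assms(3-6)] unfolding d_def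
    by (intro measure_bad_event_le) auto
  have summable: "summable (\<lambda>k. ?\<mu> (?B k))"
    by (rule summable_comparison_test[OF _ summable_mult[OF summable_geometric]]) (use bound in auto)
  have "?\<mu> (\<Union>k. ?B k) \<le> (\<Sum>k. ?\<mu> (?B k))"
    by (rule J.finite_measure_subadditive_countably[OF _ summable]) (auto intro: sets_bad_event)
  also have "\<dots> \<le> (\<Sum>k. d * (1/2) ^ k)"
    by (rule suminf_le[OF bound summable summable_mult[OF summable_geometric]]) simp
  also have "\<dots> = 2 * d"
    by (simp add: suminf_mult[OF summable_geometric] suminf_geometric)
  finally have "1 - 2 * d \<le> ?\<mu> (space (joint_law p q) - (\<Union>k. ?B k))"
    by (subst J.prob_compl) (auto intro: sets_bad_event)
  also have "\<dots> \<le> ?\<mu> {(omega, eta). origin_in_infinite_cluster L omega eta}"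
  proof (rule J.finite_measure_mono[OF _ sets_origin_in_infinite_cluster])
    show "space (joint_law p q) - (\<Union>k. ?B k) \<subseteq> {(omega, eta). origin_in_infinite_cluster L omega eta}"
      using origin_in_infinite_cluster_if_level_good[OF assms(2)] by (auto simp: bad_event_def)
  qed
  finally show ?thesis .
qed

lemma box_side_bounds:
  assumes "eps > 0" "0 < q" "q < 1"
  shows "0 < box_side q eps" "real (box_side q eps) \<le> q powr (-1 - eps/3)"
    "q powr (-1 - eps/3) < real (box_side q eps) + 1"
proof -
  let ?X = "q powr (-1 - eps/3)"
  have "q powr (1 + eps/3) \<le> 1"
    using assms by (intro powr_le1) auto
  then have "1 \<le> inverse (q powr (1 + eps/3))"
    using assms(2) by (simp add: one_le_inverse_iff)
  also have "inverse (q powr (1 + eps/3)) = ?X"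
    by (simp add: powr_minus[symmetric])
  finally have "1 \<le> ?X" .
  moreover have "real (box_side q eps) = of_int \<lfloor>?X\<rfloor>"
    unfolding box_side_def using \<open>1 \<le> ?X\<close> by simp
  ultimately show "0 < box_side q eps" "real (box_side q eps) \<le> ?X" "?X < real (box_side q eps) + 1"
    by linarith+
qed

lemma bad_box_bound_le:
  fixes eps p q :: real
  defines "L \<equiv> box_side q eps"
  assumes "eps > 0" "0 < q" "q < 1" "0 \<le> p" "p < q powr (2 + eps)"
    and exp_small: "2 * q powr (-1 - eps/3) * exp (q - q powr (-eps/3)) \<le> q powr (eps/3)"
  shows "real L * real L * p + 2 * real L * (1 - q) ^ L \<le> 2 * q powr (eps/3)"
proof -
  let ?X = "q powr (-1 - eps/3)"
  note L = box_side_bounds[OF assms(2-4), folded L_def]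
  have "real L * real L * p \<le> ?X * ?X * q powr (2 + eps)"
    using L assms(5,6) by (intro mult_mono) auto
  also have "\<dots> = q powr (eps/3)"
    by (simp flip: powr_add)
  finally have area: "real L * real L * p \<le> q powr (eps/3)" .
  have "(1 - q) ^ L \<le> exp (- q) ^ L"
    using assms(3,4) by (intro power_mono) (auto simp: exp_ge_add_one_self[of "-q", simplified])
  also have "\<dots> = exp (- q * real L)"
    by (simp add: exp_of_nat_mult[symmetric] mult.commute)
  also have "\<dots> \<le> exp (q - q * ?X)"
  proof -
    have "q * ?X \<le> q * (real L + 1)"
      using L(3) assms(3) by (intro mult_left_mono) auto
    then show ?thesis
      by (simp add: algebra_simps)
  qed
  also have "q * ?X = q powr (-eps/3)"
    using assms(3) by (simp add: powr_mult_base)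
  finally have "2 * real L * (1 - q) ^ L \<le> 2 * ?X * exp (q - q powr (-eps/3))"
    using L(2) assms(3,4) by (intro mult_mono) auto
  with area exp_small show ?thesis
    by linarith
qed

lemma measure_origin_in_infinite_cluster_small_q:
  fixes eps p q :: real
  assumes "eps > 0" "0 < q" "q < 1" "0 \<le> p" "p < q powr (2 + eps)"
    and "2 * q powr (-1 - eps/3) * exp (q - q powr (-eps/3)) \<le> q powr (eps/3)"
    and "q powr (eps/3) \<le> 1/324"
  shows "1 - 4 * q powr (eps/3)
    \<le> measure (joint_law p q) {(omega, eta). origin_in_infinite_cluster (box_side q eps) omega eta}"
proof -
  let ?L = "box_side q eps"
  let ?d = "real ?L * real ?L * p + 2 * real ?L * (1 - q) ^ ?L"
  have d: "?d \<le> 2 * q powr (eps/3)"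
    by (rule bad_box_bound_le[OF assms(1-6)])
  have "q powr (2 + eps) \<le> 1"
    using assms(1-3) by (intro powr_le1) auto
  then have cluster: "1 - 2 * ?d \<le> measure (joint_law p q) {(omega, eta). origin_in_infinite_cluster ?L omega eta}"
    using assms(2-5,7) d box_side_bounds(1)[OF assms(1-3)]
    by (intro measure_origin_in_infinite_cluster_ge) auto
  have "1 - 4 * q powr (eps/3) \<le> 1 - 2 * ?d"
    using d by simp
  then show ?thesis
    using cluster by (rule order_trans)
qed

theorem corollary2:
  fixes eps :: real
  assumes "eps > 0"
  shows "\<exists>q0 > 0. \<forall>q p. 0 < q \<and> q < q0 \<and> 0 \<le> p \<and> p < q powr (2 + eps) \<longrightarrow>
           measure (joint_law p q)
             {(omega, eta). origin_in_infinite_cluster (box_side q eps) omega eta}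
           \<ge> 1 - 16 * q powr (eps / 3)"
proof -
  have "\<forall>\<^sub>F q in at_right 0. q < 1 \<and> 2 * q powr (-1 - eps/3) * exp (q - q powr (-eps/3)) \<le> q powr (eps/3)
      \<and> q powr (eps/3) \<le> 1/324"
    using assms by (intro eventually_conj) real_asymp+
  then obtain q0 where "q0 > 0" and small: "\<And>q. 0 < q \<Longrightarrow> q < q0 \<Longrightarrow> q < 1 \<and>
      2 * q powr (-1 - eps/3) * exp (q - q powr (-eps/3)) \<le> q powr (eps/3) \<and> q powr (eps/3) \<le> 1/324"
    unfolding eventually_at_right_field by auto
  show ?thesis
  proof (intro exI[of _ q0] conjI allI impI \<open>q0 > 0\<close>)
    fix q p :: real
    assume qp: "0 < q \<and> q < q0 \<and> 0 \<le> p \<and> p < q powr (2 + eps)"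
    have "1 - 16 * q powr (eps / 3) \<le> 1 - 4 * q powr (eps / 3)"
      by simp
    also have "\<dots> \<le> measure (joint_law p q)
        {(omega, eta). origin_in_infinite_cluster (box_side q eps) omega eta}"
      using qp small[of q]
      by (intro measure_origin_in_infinite_cluster_small_q[OF assms]) auto
    finally show "measure (joint_law p q)
        {(omega, eta). origin_in_infinite_cluster (box_side q eps) omega eta}
      \<ge> 1 - 16 * q powr (eps / 3)" .
  qed
qed

end
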